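(* Let $H$ be the 28-element set $H=\{n_M : n\in\mathbb{Z}_{12}\}\cup\{n_m : n\in\mathbb{Z}_{12}\}\cup\{n_{\mathrm{aug}} : n\in\{0,1,2,3\}\}$, and define three relations on $H$: - $\mathcal{P}$ is the symmetric relation consisting exactly of the pairs $(n_M,n_m)$ and $(n_m,n_M)$ for $n\in\mathbb{Z}_{12}$, together with the pairs $(n_{\mathrm{aug}},n_{\mathrm{aug}})$ for $0\le n\le 3$; - $\mathcal{L}$ is the symmetric relation consisting exactly of the pairs $(n_M,(n+4)_m)$ and $((n+4)_m,n_M)$ for $n\in\mathbb{Z}_{12}$, together with the pairs $(n_{\mathrm{aug}},n_{\mathrm{aug}})$ for $0\le n\le 3$; - $\mathcal{U}$ is the symmetric relation consisting exactly of the pairs $(n_M,(n \bmod 4)_{\mathrm{aug}})$, $(n_m,((n+3)\bmod 4)_{\mathrm{aug}})$ for $n\in\mathbb{Z}_{12}$, together with their reverses. Let $M_{\mathcal{UPL}}$ be the monoid of relations on $H$ generated by $\mathcal{U},\mathcal{P},\mathcal{L}$ under composition of relations (with identity $e$ the identity relation). Then $M_{\mathcal{UPL}}$ has 40 elements and has the presentation $$M_{\mathcal{UPL}}=\langle \mathcal{U},\mathcal{P},\mathcal{L}\mid \mathcal{P}^2=\mathcal{L}^2=e,\ \mathcal{LPL}=\mathcal{PLP},\ \mathcal{U}^3=\mathcal{U},\ \mathcal{UP}=\mathcal{UL},\ \mathcal{PU}=\mathcal{LU},\ \mathcal{U}^2\mathcal{PU}^2=\mathcal{P}\mathcal{U}^2\mathcal{PU}^2\mathcal{P},\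 (\mathcal{UP})^2\mathcal{U}^2=\mathcal{P}(\mathcal{UP})^2\mathcal{U}^2\mathcal{P},\ \mathcal{U}^2(\mathcal{PU})^2=\mathcal{P}\mathcal{U}^2(\mathcal{PU})^2\mathcal{P}\rangle.$$
   Context: Indices $n$ of $n_M,n_m$ are taken modulo 12. The elements of $H$ are formal labels (musically, $n_M$ is the major triad $\{n,n+4,n+7\}$, $n_m$ the minor triad $\{n,n+3,n+7\}$, and $k_{\mathrm{aug}}$ the augmented triad $\{k,k+4,k+8\}$, all in $\mathbb{Z}_{12}$). Composition of relations: for relations $\mathcal{R},\mathcal{R}'$ on $H$, $\mathcal{R}'\mathcal{R}=\mathcal{R}'\circ\mathcal{R}$ is the set of pairs $(x,z)$ such that there exists $y$ with $(x,y)\in\mathcal{R}$ and $(y,z)\in\mathcal{R}'$. Juxtaposition of words in the presentation denotes this composition. *)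

theory Defs
  imports Main
begin

text \<open>Triads: Maj n = n_M, Min n = n_m (n in {0..11} representing Z_12),
  Aug k = k_aug (k in {0..3}).\<close>
datatype triad = Maj int | Min int | Aug int

definition H :: "triad set" where
  "H = {Maj n | n. 0 \<le> n \<and> n < 12} \<union> {Min n | n. 0 \<le> n \<and> n < 12}
       \<union> {Aug n | n. 0 \<le> n \<and> n \<le> 3}"

definition relP :: "triad rel" where
  "relP = {(Maj n, Min n) | n. 0 \<le> n \<and> n < 12} \<union> {(Min n, Maj n) | n. 0 \<le> n \<and> n < 12}
          \<union> {(Aug n, Aug n) | n. 0 \<le> n \<and> n \<le> 3}"

definition relL :: "triad rel" where
  "relL = {(Maj n, Min ((n + 4) mod 12)) | n. 0 \<le> n \<and> n < 12}
          \<union> {(Min ((n + 4) mod 12), Maj n) | n. 0 \<le> n \<and> n < 12}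
          \<union> {(Aug n, Aug n) | n. 0 \<le> n \<and> n \<le> 3}"

definition relU :: "triad rel" where
  "relU = {(Maj n, Aug (n mod 4)) | n. 0 \<le> n \<and> n < 12}
          \<union> {(Min n, Aug ((n + 3) mod 4)) | n. 0 \<le> n \<and> n < 12}
          \<union> {(Aug (n mod 4), Maj n) | n. 0 \<le> n \<and> n < 12}
          \<union> {(Aug ((n + 3) mod 4), Min n) | n. 0 \<le> n \<and> n < 12}"

text \<open>Composition as in the paper: R' R = {(x,z). \<exists>y. (x,y)\<in>R \<and> (y,z)\<in>R'},
  which is Isabelle's  R O R'.\<close>
definition comp_rel :: "triad rel \<Rightarrow> triad rel \<Rightarrow> triad rel" where
  "comp_rel R' R = R O R'"

inductive_set M_UPL :: "triad rel set" where
  e: "Id_on H \<in> M_UPL"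
| step: "A \<in> M_UPL \<Longrightarrow> G \<in> {relU, relP, relL} \<Longrightarrow> comp_rel G A \<in> M_UPL"

datatype gen = gU | gP | gL

fun gen_rel :: "gen \<Rightarrow> triad rel" where
  "gen_rel gU = relU" | "gen_rel gP = relP" | "gen_rel gL = relL"

fun eval_word :: "gen list \<Rightarrow> triad rel" where
  "eval_word [] = Id_on H"
| "eval_word (x # w) = comp_rel (gen_rel x) (eval_word w)"

definition upl_relations :: "(gen list \<times> gen list) set" where
  "upl_relations =
    { ([gP, gP], []),
      ([gL, gL], []),
      ([gL, gP, gL], [gP, gL, gP]),
      ([gU, gU, gU], [gU]),
      ([gU, gP], [gU, gL]),
      ([gP, gU], [gL, gU]),
      ([gU, gU, gP, gU, gU], [gP, gU, gU, gP, gU, gU, gP]),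
      ([gU, gP, gU, gP, gU, gU], [gP, gU, gP, gU, gP, gU, gU, gP]),
      ([gU, gU, gP, gU, gP, gU], [gP, gU, gU, gP, gU, gP, gU, gP]) }"

inductive upl_cong :: "gen list \<Rightarrow> gen list \<Rightarrow> bool" where
  base: "(l, r) \<in> upl_relations \<Longrightarrow> upl_cong (a @ l @ b) (a @ r @ b)"
| refl: "upl_cong w w"
| sym: "upl_cong v w \<Longrightarrow> upl_cong w v"
| trans: "upl_cong u v \<Longrightarrow> upl_cong v w \<Longrightarrow> upl_cong u w"

end

theory Submission
  imports Defs
begin

text \<open>Every generator applied to one of 40 explicit normal forms can be rewritten, by an explicit
  chain of applications of the defining relations, into another normal form; hence every word is
  congruent to a normal form. Conversely the defining relations hold in \<open>M_UPL\<close>, and the 40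
  normal forms evaluate to pairwise distinct relations. So evaluation identifies the words modulo
  the congruence with \<open>M_UPL\<close>, which therefore has exactly 40 elements.\<close>

definition triads :: "triad list" where
  "triads = map Maj [0..11] @ map Min [0..11] @ map Aug [0..3]"

fun gen_pairs :: "gen \<Rightarrow> (triad \<times> triad) list" where
  "gen_pairs gU =
     map (\<lambda>n. (Maj n, Aug (n mod 4))) [0..11] @ map (\<lambda>n. (Min n, Aug ((n + 3) mod 4))) [0..11]
     @ map (\<lambda>n. (Aug (n mod 4), Maj n)) [0..11] @ map (\<lambda>n. (Aug ((n + 3) mod 4), Min n)) [0..11]"
| "gen_pairs gP =
     map (\<lambda>n. (Maj n, Min n)) [0..11] @ map (\<lambda>n. (Min n, Maj n)) [0..11]
     @ map (\<lambda>n. (Aug n, Aug n)) [0..3]"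
| "gen_pairs gL =
     map (\<lambda>n. (Maj n, Min ((n + 4) mod 12))) [0..11] @ map (\<lambda>n. (Min ((n + 4) mod 12), Maj n)) [0..11]
     @ map (\<lambda>n. (Aug n, Aug n)) [0..3]"

lemma int_range_12: "{n::int. 0 \<le> n \<and> n < 12} = set [0..11]"
  by auto

lemma int_range_4: "{n::int. 0 \<le> n \<and> n \<le> 3} = set [0..3]"
  by auto

lemma H_eq_set_triads: "H = set triads"
  unfolding H_def triads_def set_append set_map
  by (simp only: setcompr_eq_image int_range_12 int_range_4 Un_assoc)

lemma gen_rel_eq_set_gen_pairs: "gen_rel x = set (gen_pairs x)"
  by (cases x; simp only: gen_rel.simps gen_pairs.simps relU_def relP_def relL_def set_append set_map
        setcompr_eq_image[where f = "\<lambda>n. (_ n, _ n)"] int_range_12 int_range_4 Un_assoc)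

lemma gen_rel_subset: "gen_rel x \<subseteq> H \<times> H"
proof -
  have "list_all (\<lambda>(a, b). a \<in> set triads \<and> b \<in> set triads) (gen_pairs x)"
    by (cases x; simp only: gen_pairs.simps; code_simp)
  then show ?thesis
    by (auto simp: gen_rel_eq_set_gen_pairs H_eq_set_triads list_all_iff)
qed

lemma eval_word_subset: "eval_word w \<subseteq> H \<times> H"
  by (induction w) (use gen_rel_subset in \<open>auto simp: comp_rel_def\<close>)

lemma eval_word_append: "eval_word (u @ v) = eval_word v O eval_word u"
proof (induction u)
  case Nil
  show ?case using eval_word_subset[of v] by auto
next
  case (Cons x u)
  then show ?case by (simp add: comp_rel_def O_assoc)
qed

lemma M_UPL_eq_range_eval_word: "M_UPL = range eval_word"
proof
  show "M_UPL \<subseteq> range eval_word"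
  proof
    fix A assume "A \<in> M_UPL"
    then show "A \<in> range eval_word"
    proof (induction rule: M_UPL.induct)
      case e
      show ?case by (metis eval_word.simps(1) rangeI)
    next
      case (step A G)
      then obtain w x where "A = eval_word w" "G = gen_rel x"
        by (metis gen_rel.simps imageE insert_iff singletonD)
      then have "comp_rel G A = eval_word (x # w)" by simp
      then show ?case by (metis rangeI)
    qed
  qed
next
  have "eval_word w \<in> M_UPL" for w
  proof (induction w)
    case Nil
    show ?case by (simp add: M_UPL.e)
  next
    case (Cons x w)
    have "gen_rel x \<in> {relU, relP, relL}" by (cases x) auto
    with Cons show ?case by (simp add: M_UPL.step)
  qed
  then show "range eval_word \<subseteq> M_UPL" by blast
qed

fun successors :: "gen \<Rightarrow> triad \<Rightarrow> triad list" where
  "successors gP (Maj n) = [Min n]"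
| "successors gP (Min n) = [Maj n]"
| "successors gP (Aug k) = [Aug k]"
| "successors gL (Maj n) = [Min ((n + 4) mod 12)]"
| "successors gL (Min n) = [Maj ((n + 8) mod 12)]"
| "successors gL (Aug k) = [Aug k]"
| "successors gU (Maj n) = [Aug (n mod 4)]"
| "successors gU (Min n) = [Aug ((n + 3) mod 4)]"
\<comment> \<open>the majors \<open>n \<equiv> k\<close> and the minors \<open>n \<equiv> k + 1 (mod 4)\<close>\<close>
| "successors gU (Aug k) = [Maj k, Maj (k + 4), Maj (k + 8),
     Min ((k + 1) mod 4), Min ((k + 1) mod 4 + 4), Min ((k + 1) mod 4 + 8)]"

fun word_image :: "gen list \<Rightarrow> triad \<Rightarrow> triad list" where
  "word_image [] a = (if a \<in> set triads then [a] else [])"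
| "word_image (x # w) a = remdups (concat (map (successors x) (word_image w a)))"

lemma Image_gen_rel:
  assumes "b \<in> H"
  shows "gen_rel x `` {b} = set (successors x b)"
proof -
  have "list_all (\<lambda>b. list_all (\<lambda>x. set (successors x b) =
      set (map snd (filter (\<lambda>p. fst p = b) (gen_pairs x)))) [gU, gP, gL]) triads"
    by code_simp
  moreover have "x \<in> set [gU, gP, gL]" by (cases x) auto
  ultimately have "set (successors x b) = set (map snd (filter (\<lambda>p. fst p = b) (gen_pairs x)))"
    using assms unfolding H_eq_set_triads list_all_iff by blast
  then show ?thesis by (auto simp: gen_rel_eq_set_gen_pairs image_iff)
qed

lemma Image_eval_word: "eval_word w `` {a} = set (word_image w a)"
proof (induction w)
  case Nil
  show ?case by (auto simp: H_eq_set_triads)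
next
  case (Cons x w)
  have "eval_word (x # w) `` {a} = gen_rel x `` (eval_word w `` {a})"
    by (auto simp: comp_rel_def)
  also have "\<dots> = (\<Union>b \<in> eval_word w `` {a}. gen_rel x `` {b})"
    by blast
  also have "\<dots> = (\<Union>b \<in> eval_word w `` {a}. set (successors x b))"
  proof (rule SUP_cong[OF HOL.refl])
    fix b assume "b \<in> eval_word w `` {a}"
    with eval_word_subset[of w] have "b \<in> H" by blast
    then show "gen_rel x `` {b} = set (successors x b)" by (rule Image_gen_rel)
  qed
  finally show ?case by (simp add: Cons)
qed

lemma eval_word_eqI:
  assumes "\<forall>a \<in> set triads. set (word_image v a) = set (word_image w a)"
  shows "eval_word v = eval_word w"
proof -
  have "eval_word v `` {a} = eval_word w `` {a}" for a
  proof (cases "a \<in> H")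
    case True
    with assms show ?thesis by (simp add: Image_eval_word H_eq_set_triads)
  next
    case False
    with eval_word_subset[of v] eval_word_subset[of w] show ?thesis by blast
  qed
  then show ?thesis by (metis Image_singleton_iff subrelI subset_antisym)
qed

definition relation_list :: "(gen list \<times> gen list) list" where
  "relation_list =
    [([gP, gP], []),
     ([gL, gL], []),
     ([gL, gP, gL], [gP, gL, gP]),
     ([gU, gU, gU], [gU]),
     ([gU, gP], [gU, gL]),
     ([gP, gU], [gL, gU]),
     ([gU, gU, gP, gU, gU], [gP, gU, gU, gP, gU, gU, gP]),
     ([gU, gP, gU, gP, gU, gU], [gP, gU, gP, gU, gP, gU, gU, gP]),
     ([gU, gU, gP, gU, gP, gU], [gP, gU, gU, gP, gU, gP, gU, gP])]"

lemma upl_relations_eq_set_relation_list: "upl_relations = set relation_list"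
  by (simp add: upl_relations_def relation_list_def)

lemma eval_word_upl_relation:
  assumes "(l, r) \<in> upl_relations"
  shows "eval_word l = eval_word r"
proof -
  have "list_all (\<lambda>(l, r). \<forall>a \<in> set triads. set (word_image l a) = set (word_image r a)) relation_list"
    by code_simp
  with assms have "\<forall>a \<in> set triads. set (word_image l a) = set (word_image r a)"
    by (auto simp: upl_relations_eq_set_relation_list list_all_iff)
  then show ?thesis by (rule eval_word_eqI)
qed

lemma eval_word_eq_if_upl_cong: "upl_cong v w \<Longrightarrow> eval_word v = eval_word w"
proof (induction rule: upl_cong.induct)
  case (base l r a b)
  then show ?case using eval_word_upl_relation[OF base] by (simp add: eval_word_append)
qed simp_all

lemma upl_cong_Cons: "upl_cong v w \<Longrightarrow> upl_cong (x # v) (x # w)"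
proof (induction rule: upl_cong.induct)
  case (base l r a b)
  then show ?case using upl_cong.base[of l r "x # a" b] by simp
next
  case (refl w)
  show ?case by (rule upl_cong.refl)
next
  case (sym v w)
  from sym.IH show ?case by (rule upl_cong.sym)
next
  case (trans u v w)
  from trans.IH show ?case by (rule upl_cong.trans)
qed

definition rewrite_rules :: "(gen list \<times> gen list) list" where
  "rewrite_rules = relation_list @ map prod.swap relation_list"

definition rewrite_step :: "gen list \<Rightarrow> gen list \<Rightarrow> bool" where
  "rewrite_step u v \<longleftrightarrow> (\<exists>(l, r) \<in> set rewrite_rules. \<exists>i \<in> set [0..<Suc (length u)].
     take (length l) (drop i u) = l \<and> v = take i u @ r @ drop (i + length l) u)"

lemma upl_cong_if_rewrite_step:
  assumes "rewrite_step u v"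
  shows "upl_cong u v"
proof -
  obtain l r i where lr: "(l, r) \<in> set rewrite_rules"
    and l: "take (length l) (drop i u) = l" and v: "v = take i u @ r @ drop (i + length l) u"
    using assms unfolding rewrite_step_def by blast
  let ?a = "take i u" and ?b = "drop (i + length l) u"
  have u: "?a @ l @ ?b = u"
    by (metis append_take_drop_id drop_drop add.commute l)
  from lr consider "(l, r) \<in> upl_relations" | "(r, l) \<in> upl_relations"
    unfolding rewrite_rules_def upl_relations_eq_set_relation_list by force
  then have "upl_cong (?a @ l @ ?b) (?a @ r @ ?b)"
  proof cases
    case 1
    then show ?thesis by (rule upl_cong.base)
  next
    case 2
    then show ?thesis by (rule upl_cong.sym[OF upl_cong.base])
  qed
  then show ?thesis
    by (simp only: u v)
qed

fun rewrite_chain :: "gen list list \<Rightarrow> bool" where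
  "rewrite_chain (u # v # ws) \<longleftrightarrow> rewrite_step u v \<and> rewrite_chain (v # ws)"
| "rewrite_chain _ \<longleftrightarrow> True"

lemma upl_cong_if_rewrite_chain: "rewrite_chain (u # ws) \<Longrightarrow> upl_cong u (last (u # ws))"
proof (induction ws arbitrary: u)
  case Nil
  show ?case by (simp add: upl_cong.refl)
next
  case (Cons v ws)
  from Cons.prems have step: "rewrite_step u v" and chain: "rewrite_chain (v # ws)"
    by simp_all
  from upl_cong_if_rewrite_step[OF step] Cons.IH[OF chain]
  have "upl_cong u (last (v # ws))" by (rule upl_cong.trans)
  then show ?case by simp
qed

definition normal_forms :: "gen list list" where
  "normal_forms = [
   [],
   [gU], [gP], [gL],
   [gU, gU], [gP, gU], [gU, gP], [gL, gP],
   [gP, gL],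
   [gP, gU, gU], [gU, gP, gU], [gU, gU, gP], [gP, gU, gP],
   [gP, gL, gP],
   [gU, gP, gU, gU], [gU, gU, gP, gU], [gP, gU, gP, gU], [gP, gU, gU, gP],
   [gU, gP, gU, gP],
   [gU, gU, gP, gU, gU], [gP, gU, gP, gU, gU], [gP, gU, gU, gP, gU], [gU, gP, gU, gP, gU],
   [gU, gP, gU, gU, gP], [gU, gU, gP, gU, gP], [gP, gU, gP, gU, gP],
   [gP, gU, gU, gP, gU, gU], [gU, gP, gU, gP, gU, gU], [gU, gP, gU, gU, gP, gU], [gP, gU, gP, gU, gP, gU],
   [gP, gU, gP, gU, gU, gP], [gP, gU, gU, gP, gU, gP], [gU, gP, gU, gP, gU, gP],
   [gP, gU, gP, gU, gP, gU, gU], [gP, gU, gP, gU, gU, gP, gU], [gU, gP, gU, gP, gU, gP, gU], [gU, gP, gU, gU, gP, gU, gP],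
   [gP, gU, gP, gU, gP, gU, gP],
   [gP, gU, gP, gU, gP, gU, gP, gU], [gP, gU, gP, gU, gU, gP, gU, gP]]"

text \<open>An entry \<open>((x, u), ws)\<close> records a rewrite chain \<open>x # u, ws\<^sub>1, \<dots>\<close> ending in a normal form.
  Pairs without an entry are those where \<open>x # u\<close> is itself a normal form.\<close>
definition reductions :: "((gen \<times> gen list) \<times> gen list list) list" where
  "reductions = [
  ((gL, [gU]), [[gP, gU]]),
  ((gP, [gP]), [[]]),
  ((gU, [gL]), [[gU, gP]]),
  ((gL, [gL]), [[]]),
  ((gU, [gU, gU]), [[gU]]),
  ((gL, [gU, gU]), [[gP, gU, gU]]),
  ((gP, [gP, gU]), [[gU]]),
  ((gL, [gP, gU]), [[gL, gL, gU], [gU]]),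
  ((gL, [gU, gP]), [[gP, gU, gP]]),
  ((gU, [gL, gP]), [[gU, gP, gP], [gU]]),
  ((gL, [gL, gP]), [[gP]]),
  ((gU, [gP, gL]), [[gU, gL, gL], [gU]]),
  ((gP, [gP, gL]), [[gL]]),
  ((gL, [gP, gL]), [[gP, gL, gP]]),
  ((gP, [gP, gU, gU]), [[gU, gU]]),
  ((gL, [gP, gU, gU]), [[gL, gL, gU, gU], [gU, gU]]),
  ((gL, [gU, gP, gU]), [[gP, gU, gP, gU]]),
  ((gU, [gU, gU, gP]), [[gU, gP]]),
  ((gL, [gU, gU, gP]), [[gP, gU, gU, gP]]),
  ((gP, [gP, gU, gP]), [[gU, gP]]),
  ((gL, [gP, gU, gP]), [[gL, gL, gU, gP], [gU, gP]]),
  ((gU, [gP, gL, gP]), [[gU, gL, gL, gP], [gU, gP]]),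
  ((gP, [gP, gL, gP]), [[gL, gP]]),
  ((gL, [gP, gL, gP]), [[gP, gL, gP, gP], [gP, gL]]),
  ((gL, [gU, gP, gU, gU]), [[gP, gU, gP, gU, gU]]),
  ((gU, [gU, gU, gP, gU]), [[gU, gP, gU]]),
  ((gL, [gU, gU, gP, gU]), [[gP, gU, gU, gP, gU]]),
  ((gP, [gP, gU, gP, gU]), [[gU, gP, gU]]),
  ((gL, [gP, gU, gP, gU]), [[gL, gL, gU, gP, gU], [gU, gP, gU]]),
  ((gP, [gP, gU, gU, gP]), [[gU, gU, gP]]),
  ((gL, [gP, gU, gU, gP]), [[gL, gL, gU, gU, gP], [gU, gU, gP]]),
  ((gL, [gU, gP, gU, gP]), [[gP, gU, gP, gU, gP]]),
  ((gU, [gU, gU, gP, gU, gU]), [[gU, gP, gU, gU]]),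
  ((gL, [gU, gU, gP, gU, gU]), [[gP, gU, gU, gP, gU, gU]]),
  ((gP, [gP, gU, gP, gU, gU]), [[gU, gP, gU, gU]]),
  ((gL, [gP, gU, gP, gU, gU]), [[gL, gL, gU, gP, gU, gU], [gU, gP, gU, gU]]),
  ((gP, [gP, gU, gU, gP, gU]), [[gU, gU, gP, gU]]),
  ((gL, [gP, gU, gU, gP, gU]), [[gL, gL, gU, gU, gP, gU], [gU, gU, gP, gU]]),
  ((gU, [gU, gP, gU, gP, gU]), [[gP, gU, gU, gP, gU, gP, gU, gP], [gP, gU, gU, gP, gU, gP, gU, gU, gU, gP], [gP, gP, gU, gU, gP, gU, gP, gU, gP, gU, gU, gP], [gU, gU, gP, gU, gP, gU, gP, gU, gU, gP], [gU, gU, gU, gP, gU, gP, gU, gU], [gU, gP, gU, gP, gU, gU]]),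
  ((gL, [gU, gP, gU, gP, gU]), [[gP, gU, gP, gU, gP, gU]]),
  ((gU, [gU, gP, gU, gU, gP]), [[gP, gU, gU, gP, gU, gU, gP, gP], [gP, gU, gU, gP, gU, gU]]),
  ((gL, [gU, gP, gU, gU, gP]), [[gP, gU, gP, gU, gU, gP]]),
  ((gU, [gU, gU, gP, gU, gP]), [[gU, gP, gU, gP]]),
  ((gL, [gU, gU, gP, gU, gP]), [[gP, gU, gU, gP, gU, gP]]),
  ((gP, [gP, gU, gP, gU, gP]), [[gU, gP, gU, gP]]),
  ((gL, [gP, gU, gP, gU, gP]), [[gL, gL, gU, gP, gU, gP], [gU, gP, gU, gP]]),
  ((gU, [gP, gU, gU, gP, gU, gU]), [[gU, gP, gP, gU, gU, gP, gU, gU, gP], [gU, gU, gU, gP, gU, gU, gP], [gU, gP, gU, gU, gP]]),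
  ((gP, [gP, gU, gU, gP, gU, gU]), [[gU, gU, gP, gU, gU]]),
  ((gL, [gP, gU, gU, gP, gU, gU]), [[gL, gL, gU, gU, gP, gU, gU], [gU, gU, gP, gU, gU]]),
  ((gU, [gU, gP, gU, gP, gU, gU]), [[gU, gP, gU, gP, gU, gP, gU, gU, gP], [gU, gU, gU, gP, gU, gP, gU, gP, gU, gU, gP], [gU, gP, gU, gU, gP, gU, gP, gU, gP, gP, gU, gU, gP], [gU, gP, gU, gU, gP, gU, gP, gU, gU, gU, gP], [gU, gP, gU, gU, gP, gU, gP, gU, gP], [gU, gU, gU, gP, gU, gP, gU], [gU, gP, gU, gP, gU]]),
  ((gL, [gU, gP, gU, gP, gU, gU]), [[gP, gU, gP, gU, gP, gU, gU]]),
  ((gU, [gU, gP, gU, gU, gP, gU]), [[gP, gU, gU, gP, gU, gU, gP, gP, gU], [gP, gU, gU, gP, gU, gU, gU], [gP, gU, gU, gP, gU]]),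
  ((gL, [gU, gP, gU, gU, gP, gU]), [[gP, gU, gP, gU, gU, gP, gU]]),
  ((gP, [gP, gU, gP, gU, gP, gU]), [[gU, gP, gU, gP, gU]]),
  ((gL, [gP, gU, gP, gU, gP, gU]), [[gL, gL, gU, gP, gU, gP, gU], [gU, gP, gU, gP, gU]]),
  ((gU, [gP, gU, gP, gU, gU, gP]), [[gP, gU, gP, gU, gP, gU, gU, gP, gP], [gP, gU, gP, gU, gP, gU, gU]]),
  ((gP, [gP, gU, gP, gU, gU, gP]), [[gU, gP, gU, gU, gP]]),
  ((gL, [gP, gU, gP, gU, gU, gP]), [[gL, gL, gU, gP, gU, gU, gP], [gU, gP, gU, gU, gP]]),
  ((gP, [gP, gU, gU, gP, gU, gP]), [[gU, gU, gP, gU, gP]]),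
  ((gL, [gP, gU, gU, gP, gU, gP]), [[gL, gL, gU, gU, gP, gU, gP], [gU, gU, gP, gU, gP]]),
  ((gU, [gU, gP, gU, gP, gU, gP]), [[gU, gU, gP, gU, gP, gU, gU, gU, gP], [gP, gU, gU, gP, gU, gP, gU, gP, gU, gU, gP], [gP, gU, gU, gU, gP, gU, gP, gU, gU], [gP, gU, gP, gU, gP, gU, gU]]),
  ((gL, [gU, gP, gU, gP, gU, gP]), [[gP, gU, gP, gU, gP, gU, gP]]),
  ((gU, [gP, gU, gP, gU, gP, gU, gU]), [[gU, gP, gU, gU, gU, gP, gU, gP, gU, gU], [gU, gP, gU, gU, gP, gU, gP, gU, gP, gU, gU, gP], [gU, gU, gU, gP, gU, gP, gU, gU, gU, gP], [gU, gP, gU, gP, gU, gU, gU, gP], [gU, gP, gU, gP, gU, gP]]),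
  ((gP, [gP, gU, gP, gU, gP, gU, gU]), [[gU, gP, gU, gP, gU, gU]]),
  ((gL, [gP, gU, gP, gU, gP, gU, gU]), [[gL, gL, gU, gP, gU, gP, gU, gU], [gU, gP, gU, gP, gU, gU]]),
  ((gU, [gP, gU, gP, gU, gU, gP, gU]), [[gP, gU, gP, gU, gP, gU, gU, gP, gP, gU], [gP, gU, gP, gU, gP, gU, gU, gU], [gP, gU, gP, gU, gP, gU]]),
  ((gP, [gP, gU, gP, gU, gU, gP, gU]), [[gU, gP, gU, gU, gP, gU]]),
  ((gL, [gP, gU, gP, gU, gU, gP, gU]), [[gL, gL, gU, gP, gU, gU, gP, gU], [gU, gP, gU, gU, gP, gU]]),
  ((gU, [gU, gP, gU, gP, gU, gP, gU]), [[gU, gU, gP, gU, gP, gU, gU, gU, gP, gU], [gP, gU, gU, gP, gU, gP, gU, gP, gU, gU, gP, gU], [gP, gU, gU, gU, gP, gU, gP, gU, gU, gU], [gP, gU, gP, gU, gP, gU, gU, gU], [gP, gU, gP, gU, gP, gU]]),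
  ((gL, [gU, gP, gU, gP, gU, gP, gU]), [[gP, gU, gP, gU, gP, gU, gP, gU]]),
  ((gU, [gU, gP, gU, gU, gP, gU, gP]), [[gP, gU, gU, gP, gU, gU, gP, gP, gU, gP], [gP, gU, gU, gP, gU, gU, gU, gP], [gP, gU, gU, gP, gU, gP]]),
  ((gL, [gU, gP, gU, gU, gP, gU, gP]), [[gP, gU, gP, gU, gU, gP, gU, gP]]),
  ((gU, [gP, gU, gP, gU, gP, gU, gP]), [[gU, gP, gU, gP, gU, gU, gU, gP, gU, gP], [gP, gU, gP, gU, gP, gU, gU, gP, gU, gP, gU, gP], [gP, gU, gP, gU, gU, gU, gP, gU, gP, gU], [gP, gU, gP, gU, gP, gU, gP, gU]]),
  ((gP, [gP, gU, gP, gU, gP, gU, gP]), [[gU, gP, gU, gP, gU, gP]]),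
  ((gL, [gP, gU, gP, gU, gP, gU, gP]), [[gL, gL, gU, gP, gU, gP, gU, gP], [gU, gP, gU, gP, gU, gP]]),
  ((gU, [gP, gU, gP, gU, gP, gU, gP, gU]), [[gU, gP, gU, gP, gU, gU, gU, gP, gU, gP, gU], [gP, gU, gP, gU, gP, gU, gU, gP, gU, gP, gU, gP, gU], [gP, gU, gP, gU, gU, gU, gP, gU, gP, gU, gU], [gP, gU, gP, gU, gU, gP, gU, gP, gU, gP, gU, gU, gP], [gP, gU, gU, gU, gP, gU, gP, gU, gU, gU, gP], [gP, gU, gP, gU, gP, gU, gU, gU, gP], [gP, gU, gP, gU, gP, gU, gP]]),
  ((gP, [gP, gU, gP, gU, gP, gU, gP, gU]), [[gU, gP, gU, gP, gU, gP, gU]]),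
  ((gL, [gP, gU, gP, gU, gP, gU, gP, gU]), [[gL, gL, gU, gP, gU, gP, gU, gP, gU], [gU, gP, gU, gP, gU, gP, gU]]),
  ((gU, [gP, gU, gP, gU, gU, gP, gU, gP]), [[gP, gU, gP, gU, gP, gU, gU, gP, gP, gU, gP], [gP, gU, gP, gU, gP, gU, gU, gU, gP], [gP, gU, gP, gU, gP, gU, gP]]),
  ((gP, [gP, gU, gP, gU, gU, gP, gU, gP]), [[gU, gP, gU, gU, gP, gU, gP]]),
  ((gL, [gP, gU, gP, gU, gU, gP, gU, gP]), [[gL, gL, gU, gP, gU, gU, gP, gU, gP], [gU, gP, gU, gU, gP, gU, gP]])]"

definition reduction :: "gen \<Rightarrow> gen list \<Rightarrow> gen list list" where
  "reduction x u = (case map_of reductions (x, u) of Some ws \<Rightarrow> ws | None \<Rightarrow> [])"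

definition reduce :: "gen \<Rightarrow> gen list \<Rightarrow> gen list" where
  "reduce x u = last ((x # u) # reduction x u)"

lemma reductions_valid:
  "list_all (\<lambda>u. list_all (\<lambda>x. rewrite_chain ((x # u) # reduction x u) \<and> reduce x u \<in> set normal_forms)
     [gU, gP, gL]) normal_forms"
  by code_simp

lemma reduce_normal_form:
  assumes "u \<in> set normal_forms"
  shows "reduce x u \<in> set normal_forms" "upl_cong (x # u) (reduce x u)"
proof -
  have "x \<in> set [gU, gP, gL]" by (cases x) auto
  with assms reductions_valid
  have chain: "rewrite_chain ((x # u) # reduction x u)" and "reduce x u \<in> set normal_forms"
    unfolding list_all_iff by blast+
  then show "reduce x u \<in> set normal_forms" by blast
  from chain show "upl_cong (x # u) (reduce x u)"
    unfolding reduce_def by (rule upl_cong_if_rewrite_chain)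
qed

fun normalize_word :: "gen list \<Rightarrow> gen list" where
  "normalize_word [] = []"
| "normalize_word (x # w) = reduce x (normalize_word w)"

lemma normalize_word_in_normal_forms: "normalize_word w \<in> set normal_forms"
  by (induction w) (simp add: normal_forms_def, simp add: reduce_normal_form)

lemma upl_cong_normalize_word: "upl_cong w (normalize_word w)"
proof (induction w)
  case Nil
  show ?case by (simp add: upl_cong.refl)
next
  case (Cons x w)
  then have "upl_cong (x # w) (x # normalize_word w)" by (rule upl_cong_Cons)
  with reduce_normal_form(2)[OF normalize_word_in_normal_forms] show ?case
    by (auto intro: upl_cong.trans)
qed

lemma range_eval_word_eq_normal_forms: "range eval_word = eval_word ` set normal_forms"
  using normalize_word_in_normal_forms upl_cong_normalize_word eval_word_eq_if_upl_cong by blast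

lemma normal_forms_distinct: "distinct normal_forms" "length normal_forms = 40"
  by code_simp+

text \<open>The rows of \<open>0_M\<close> and \<open>0_aug\<close> alone already separate the 40 normal forms.\<close>
lemma inj_on_eval_word_normal_forms: "inj_on eval_word (set normal_forms)"
proof -
  let ?rows = "\<lambda>R. map (\<lambda>a. map (\<lambda>b. (a, b) \<in> R) triads) [Maj 0, Aug 0]"
  have rows: "?rows (eval_word w) = map (\<lambda>a. map (\<lambda>b. b \<in> set (word_image w a)) triads) [Maj 0, Aug 0]"
    for w
    using Image_eval_word[of w] by (auto simp: set_eq_iff)
  have "distinct (map (\<lambda>w. map (\<lambda>a. map (\<lambda>b. b \<in> set (word_image w a)) triads) [Maj 0, Aug 0])
      normal_forms)"
    by code_simp
  then have "inj_on (\<lambda>w. ?rows (eval_word w)) (set normal_forms)"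
    by (simp only: rows distinct_map)
  then show ?thesis by (auto simp: inj_on_def)
qed

lemma eval_word_eq_iff_upl_cong: "eval_word v = eval_word w \<longleftrightarrow> upl_cong v w"
proof
  assume "eval_word v = eval_word w"
  then have "eval_word (normalize_word v) = eval_word (normalize_word w)"
    using upl_cong_normalize_word eval_word_eq_if_upl_cong by metis
  then have "normalize_word v = normalize_word w"
    using inj_on_eval_word_normal_forms normalize_word_in_normal_forms by (meson inj_onD)
  then show "upl_cong v w"
    using upl_cong_normalize_word by (metis upl_cong.sym upl_cong.trans)
qed (rule eval_word_eq_if_upl_cong)

theorem mainTheorem1:
  shows "finite M_UPL \<and> card M_UPL = 40
         \<and> M_UPL = range eval_word
         \<and> (\<forall>v w. eval_word v = eval_word w \<longleftrightarrow> upl_cong v w)"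
proof -
  have M: "M_UPL = eval_word ` set normal_forms"
    by (simp add: M_UPL_eq_range_eval_word range_eval_word_eq_normal_forms)
  have "finite M_UPL" unfolding M by simp
  moreover have "card M_UPL = 40"
    unfolding M card_image[OF inj_on_eval_word_normal_forms]
    using distinct_card normal_forms_distinct by metis
  ultimately show ?thesis
    using M_UPL_eq_range_eval_word eval_word_eq_iff_upl_cong by blast
qed

end
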